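(* Let $Y$ be a continuous random variable supported on $[0,\infty)$ whose density $f$ satisfies $f(t)\le Ce^{-\lambda t}$ for all $t\ge0$, for some $C,\lambda>0$. There exist constants $S,\delta>0$, depending only on $C,\lambda$, such that $|\mathbb{E}[e^{-sY}]-1| \ge \delta|s|$ for all complex $s$ with $|s|\le S$. *)

theory Defs
  imports "HOL-Probability.Probability"
begin

end

theory Submission
  imports Defs
begin

text \<open>
  Expand \<open>exp (- s Y) = 1 - s Y + R\<close> with \<open>\<bar>R\<bar> \<le> \<bar>s\<bar>\<^sup>2 Y\<^sup>2 exp (\<bar>s\<bar> Y)\<close>, so that
  \<open>\<bar>E[exp (- s Y)] - 1\<bar> \<ge> \<bar>s\<bar> E[Y] - \<bar>s\<bar>\<^sup>2 E[Y\<^sup>2 exp (\<lambda> Y / 2)]\<close> for \<open>\<bar>s\<bar> \<le> \<lambda>/2\<close>.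
  The exponential bound on the density makes the last expectation at most \<open>16 C / \<lambda>\<^sup>3\<close>
  (a Gamma integral), and since the density is bounded by \<open>C\<close>, at most half of the mass
  lies in \<open>[0, 1/(2C)]\<close>, whence \<open>E[Y] \<ge> 1/(4C)\<close>. For small \<open>\<bar>s\<bar>\<close> the linear term wins.
\<close>

lemma norm_exp_sub_one_sub_le:
  fixes z :: "'a::{banach,real_normed_field}"
  shows "norm (exp z - 1 - z) \<le> norm z ^ 2 * exp (norm z)"
  using Taylor_exp_field[of z 1] by (simp add: algebra_simps numeral_2_eq_2)

lemma (in finite_measure) integrable_of_integrable_sq_mult_exp:
  fixes X :: "'a \<Rightarrow> real"
  assumes [measurable]: "X \<in> borel_measurable M" and "0 \<le> r"
    and "integrable M (\<lambda>\<omega>. X \<omega> ^ 2 * exp (r * \<bar>X \<omega>\<bar>))"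
  shows "integrable M X"
proof (rule square_integrable_imp_integrable)
  show "integrable M (\<lambda>\<omega>. X \<omega> ^ 2)"
    by (rule Bochner_Integration.integrable_bound[OF assms(3)])
       (use \<open>0 \<le> r\<close> in \<open>auto intro!: AE_I2 mult_le_cancel_left1[THEN iffD2]\<close>)
qed simp

lemma (in prob_space) norm_expectation_exp_sub_one_ge:
  fixes X :: "'a \<Rightarrow> real" and s :: complex
  assumes X[measurable]: "random_variable borel X"
    and h_int: "integrable M (\<lambda>\<omega>. X \<omega> ^ 2 * exp (r * \<bar>X \<omega>\<bar>))"
    and s_le: "cmod s \<le> r"
  shows "cmod s * \<bar>expectation X\<bar> - cmod s ^ 2 * expectation (\<lambda>\<omega>. X \<omega> ^ 2 * exp (r * \<bar>X \<omega>\<bar>))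
           \<le> cmod (expectation (\<lambda>\<omega>. exp (- (s * of_real (X \<omega>)))) - 1)"
proof -
  define h where "h \<omega> = X \<omega> ^ 2 * exp (r * \<bar>X \<omega>\<bar>)" for \<omega>
  define R where "R \<omega> = exp (- (s * of_real (X \<omega>))) - 1 + s * of_real (X \<omega>)" for \<omega>
  have r: "0 \<le> r" using s_le norm_ge_zero order_trans by blast
  have X_int: "integrable M X"
    using integrable_of_integrable_sq_mult_exp[OF X r h_int] .
  have R_le: "cmod (R \<omega>) \<le> cmod s ^ 2 * h \<omega>" for \<omega>
  proof -
    have "cmod (R \<omega>) \<le> (cmod s * \<bar>X \<omega>\<bar>) ^ 2 * exp (cmod s * \<bar>X \<omega>\<bar>)"
      using norm_exp_sub_one_sub_le[of "- (s * of_real (X \<omega>))"]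
      by (simp add: R_def norm_mult)
    also have "\<dots> \<le> (cmod s * \<bar>X \<omega>\<bar>) ^ 2 * exp (r * \<bar>X \<omega>\<bar>)"
      using s_le by (intro mult_left_mono) (auto intro: mult_right_mono)
    finally show ?thesis by (simp add: h_def power_mult_distrib)
  qed
  have R_meas[measurable]: "R \<in> borel_measurable M"
    unfolding R_def by measurable
  have R_int: "integrable M R"
    by (rule Bochner_Integration.integrable_bound[of _ "\<lambda>\<omega>. cmod s ^ 2 * h \<omega>"])
       (use h_int R_le in \<open>auto simp: h_def R_def intro!: AE_I2\<close>)
  have "expectation (\<lambda>\<omega>. exp (- (s * of_real (X \<omega>)))) - 1 = expectation R - s * of_real (expectation X)"
  proof -
    have "(\<lambda>\<omega>. exp (- (s * of_real (X \<omega>)))) = (\<lambda>\<omega>. R \<omega> + 1 - s * of_real (X \<omega>))"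
      by (auto simp: R_def)
    then show ?thesis
      using R_int X_int by (simp add: prob_space[simplified])
  qed
  moreover have "cmod (expectation R) \<le> cmod s ^ 2 * expectation h"
  proof -
    have "cmod (expectation R) \<le> expectation (\<lambda>\<omega>. cmod (R \<omega>))"
      by (rule integral_norm_bound)
    also have "\<dots> \<le> expectation (\<lambda>\<omega>. cmod s ^ 2 * h \<omega>)"
      by (rule integral_mono) (use R_int h_int R_le in \<open>auto simp: h_def\<close>)
    finally show ?thesis by simp
  qed
  ultimately show ?thesis
    using norm_triangle_ineq3[of "s * of_real (expectation X)" "expectation R"]
    unfolding h_def by (simp add: norm_mult norm_minus_commute)
qed

lemma
  fixes f g :: "'a \<Rightarrow> real"
  assumes [measurable]: "f \<in> borel_measurable M" "g \<in> borel_measurable M"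
    and f_nonneg: "\<And>t. 0 \<le> f t" and g_nonneg: "\<And>t. 0 \<le> g t"
    and "0 \<le> K" and le: "(\<integral>\<^sup>+ t. ennreal (f t * g t) \<partial>M) \<le> ennreal K"
  shows integrable_density_of_nn_integral_le: "integrable (density M f) g"
    and integral_density_le_of_nn_integral_le: "integral\<^sup>L (density M f) g \<le> K"
proof -
  have nn_eq: "(\<integral>\<^sup>+ t. ennreal (g t) \<partial>density M f) = (\<integral>\<^sup>+ t. ennreal (f t * g t) \<partial>M)"
    by (subst nn_integral_density) (auto simp: f_nonneg g_nonneg ennreal_mult)
  show int: "integrable (density M f) g"
    by (rule integrableI_bounded) (use nn_eq le g_nonneg in \<open>auto simp: order_le_less_trans\<close>)
  have "ennreal (integral\<^sup>L (density M f) g) = (\<integral>\<^sup>+ t. ennreal (g t) \<partial>density M f)"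
    by (rule nn_integral_eq_integral[symmetric]) (use int g_nonneg in auto)
  then have "ennreal (integral\<^sup>L (density M f) g) \<le> ennreal K"
    using nn_eq le by simp
  moreover have "0 \<le> integral\<^sup>L (density M f) g"
    using g_nonneg by simp
  ultimately show "integral\<^sup>L (density M f) g \<le> K"
    using \<open>0 \<le> K\<close> by simp
qed

lemma nn_integral_exp_bounded_density_moment_le:
  fixes f :: "real \<Rightarrow> real" and C lam :: real
  assumes "0 \<le> C" "0 < lam"
    and f_neg: "\<And>t. t < 0 \<Longrightarrow> f t = 0"
    and f_le: "\<And>t. 0 \<le> t \<Longrightarrow> f t \<le> C * exp (- lam * t)"
  shows "(\<integral>\<^sup>+ t. ennreal (f t * (t\<^sup>2 * exp (lam / 2 * \<bar>t\<bar>))) \<partial>lborel) \<le> ennreal (16 * C / lam ^ 3)"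
proof -
  have pointwise: "f t * (t\<^sup>2 * exp (lam / 2 * \<bar>t\<bar>)) \<le> 2 * C / lam * (erlang_density 0 (lam / 2) t * t\<^sup>2)"
    for t
  proof (cases "t < 0")
    case True
    then show ?thesis by (simp add: f_neg erlang_density_def)
  next
    case False
    then have "f t * (t\<^sup>2 * exp (lam / 2 * \<bar>t\<bar>)) = f t * (t\<^sup>2 * exp (lam / 2 * t))"
      by simp
    also have "\<dots> \<le> C * exp (- lam * t) * (t\<^sup>2 * exp (lam / 2 * t))"
      using False f_le[of t] by (intro mult_right_mono) auto
    also have "\<dots> = 2 * C / lam * (erlang_density 0 (lam / 2) t * t\<^sup>2)"
      using False \<open>0 < lam\<close> by (simp add: erlang_density_def field_simps flip: exp_add)
    finally show ?thesis .
  qed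
  have "(\<integral>\<^sup>+ t. ennreal (f t * (t\<^sup>2 * exp (lam / 2 * \<bar>t\<bar>))) \<partial>lborel)
      \<le> (\<integral>\<^sup>+ t. ennreal (2 * C / lam) * ennreal (erlang_density 0 (lam / 2) t * t\<^sup>2) \<partial>lborel)"
    using pointwise assms(1,2) by (intro nn_integral_mono) (simp add: ennreal_mult[symmetric] ennreal_leI)
  also have "\<dots> = ennreal (2 * C / lam) * (fact 2 / (lam / 2) ^ 2)"
    using \<open>0 < lam\<close> by (simp add: nn_integral_cmult nn_integral_erlang_ith_moment)
  also have "\<dots> = ennreal (16 * C / lam ^ 3)"
    using assms(1,2) by (simp add: ennreal_mult'[symmetric] fact_numeral field_simps power3_eq_cube power2_eq_square)
  finally show ?thesis .
qed

lemma mean_ge_of_bounded_density: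
  fixes f :: "real \<Rightarrow> real" and C :: real
  assumes f_meas[measurable]: "f \<in> borel_measurable borel"
    and f_nonneg: "\<And>t. 0 \<le> f t" and f_neg: "\<And>t. t < 0 \<Longrightarrow> f t = 0" and f_le: "\<And>t. f t \<le> C"
    and f_mass: "(\<integral>\<^sup>+ t. ennreal (f t) \<partial>lborel) = 1"
    and mean_int: "integrable (density lborel f) (\<lambda>t. t)"
    and "0 < C"
  shows "1 / (4 * C) \<le> (\<integral>t. t \<partial>density lborel f)"
proof -
  define a where "a = 1 / (2 * C)"
  have a_pos: "0 < a" using \<open>0 < C\<close> by (simp add: a_def)
  have mean_eq: "(\<integral>t. t \<partial>density lborel f) = (\<integral>t. f t * t \<partial>lborel)"
    by (subst integral_density) (auto simp: f_nonneg)
  have f_int: "integrable lborel f"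
    by (rule integrableI_bounded) (use f_mass f_nonneg in auto)
  have f_integral: "(\<integral>t. f t \<partial>lborel) = 1"
    using nn_integral_eq_integral[OF f_int] f_mass f_nonneg by simp
  have ind_int: "integrable lborel (indicator {0..a} :: real \<Rightarrow> real)"
    using a_pos by (intro integrable_real_indicator) (auto simp: emeasure_lborel_Icc)
  \<comment> \<open>Beyond \<open>a\<close> we have \<open>t f t \<ge> a f t\<close>; on \<open>[0, a]\<close> the deficit \<open>(a - t) f t\<close> is at most \<open>a C\<close>.\<close>
  have "(\<integral>t. a * f t - a * C * indicator {0..a} t \<partial>lborel) \<le> (\<integral>t. f t * t \<partial>lborel)"
  proof (rule integral_mono)
    show "integrable lborel (\<lambda>t. a * f t - a * C * indicator {0..a} t)"
      using f_int ind_int by auto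
    show "integrable lborel (\<lambda>t. f t * t)"
      using mean_int f_nonneg by (subst (asm) integrable_density) auto
    show "a * f t - a * C * indicator {0..a} t \<le> f t * t" for t
    proof (cases "0 \<le> t \<and> t \<le> a")
      case True
      then have "(a - t) * f t \<le> a * C"
        using f_le f_nonneg by (intro mult_mono) auto
      then show ?thesis using True by (simp add: algebra_simps)
    next
      case False
      then show ?thesis
        using f_neg f_nonneg[of t] mult_left_mono[of a t "f t"]
        by (cases "t < 0") (auto simp: mult.commute)
    qed
  qed
  also have "(\<integral>t. a * f t - a * C * indicator {0..a} t \<partial>lborel) = a - a * C * a"
    using f_int ind_int f_integral a_pos by simp
  also have "a - a * C * a = 1 / (4 * C)"
    using \<open>0 < C\<close> by (simp add: a_def field_simps)
  finally show ?thesis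
    by (simp add: mean_eq)
qed

lemma norm_laplace_transform_sub_one_ge_of_exp_bounded_density:
  fixes f :: "real \<Rightarrow> real" and C lam :: real and s :: complex
  assumes "0 < C" "0 < lam"
    and f_meas[measurable]: "f \<in> borel_measurable borel" and f_nonneg: "\<And>t. 0 \<le> f t"
    and f_neg: "\<And>t. t < 0 \<Longrightarrow> f t = 0" and f_mass: "(\<integral>\<^sup>+ t. ennreal (f t) \<partial>lborel) = 1"
    and f_exp_le: "\<And>t. 0 \<le> t \<Longrightarrow> f t \<le> C * exp (- lam * t)"
    and s_le: "cmod s \<le> lam / 2" "cmod s \<le> lam ^ 3 / (128 * C\<^sup>2)"
  shows "cmod s / (8 * C) \<le> cmod ((\<integral>t. exp (- (s * of_real t)) \<partial>density lborel f) - 1)"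
proof -
  define K where "K = 16 * C / lam ^ 3"
  have K: "0 < K" using assms by (simp add: K_def)
  define M where "M = density lborel (\<lambda>t. ennreal (f t))"
  have [measurable_cong]: "sets M = sets borel"
    by (simp add: M_def)
  interpret prob_space M
    by (rule prob_spaceI) (simp add: M_def emeasure_density f_mass)
  define h :: "real \<Rightarrow> real" where "h = (\<lambda>t. t\<^sup>2 * exp (lam / 2 * \<bar>t\<bar>))"
  have h_meas[measurable]: "h \<in> borel_measurable borel"
    unfolding h_def by measurable
  have h_nonneg: "0 \<le> h t" for t
    by (simp add: h_def)
  have "(\<integral>\<^sup>+ t. ennreal (f t * h t) \<partial>lborel) \<le> ennreal K"
    unfolding h_def K_def
    using assms f_neg f_exp_le by (intro nn_integral_exp_bounded_density_moment_le) auto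
  then have h_int: "integrable M h" and h_mean: "expectation h \<le> K"
    unfolding M_def
    using integrable_density_of_nn_integral_le[of f lborel h K]
      integral_density_le_of_nn_integral_le[of f lborel h K] K f_nonneg h_nonneg
    by auto
  have mean: "1 / (4 * C) \<le> expectation (\<lambda>t. t)"
    unfolding M_def
  proof (rule mean_ge_of_bounded_density[OF f_meas f_nonneg f_neg _ f_mass _ \<open>0 < C\<close>])
    show "f t \<le> C" for t
      using f_neg[of t] f_exp_le[of t] \<open>0 < C\<close> \<open>0 < lam\<close>
      by (cases "t < 0") (auto intro: order_trans mult_left_le)
    show "integrable (density lborel (\<lambda>t. ennreal (f t))) (\<lambda>t. t)"
      using integrable_of_integrable_sq_mult_exp[of "\<lambda>t. t" "lam / 2"] h_int \<open>0 < lam\<close>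
      by (simp add: M_def h_def)
  qed
  have "cmod s * (1 / (8 * C)) \<le> cmod s * (1 / (4 * C) - cmod s * K)"
  proof (rule mult_left_mono)
    have "cmod s * K \<le> lam ^ 3 / (128 * C\<^sup>2) * K"
      using s_le(2) K by (intro mult_right_mono) auto
    also have "\<dots> = 1 / (8 * C)"
      using assms by (simp add: K_def field_simps power2_eq_square power3_eq_cube)
    finally show "1 / (8 * C) \<le> 1 / (4 * C) - cmod s * K"
      by simp
  qed simp
  also have "\<dots> \<le> cmod s * \<bar>expectation (\<lambda>t. t)\<bar> - cmod s ^ 2 * expectation h"
    using mult_left_mono[OF order_trans[OF mean abs_ge_self], of "cmod s"]
      mult_left_mono[OF h_mean, of "cmod s ^ 2"]
    by (simp add: algebra_simps power2_eq_square)
  also have "\<dots> \<le> cmod (expectation (\<lambda>t. exp (- (s * of_real t))) - 1)"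
    using norm_expectation_exp_sub_one_ge[of "\<lambda>t. t" "lam / 2" s] h_int s_le
    by (simp add: h_def)
  finally show ?thesis
    by (simp add: M_def)
qed

theorem lemma8:
  fixes C lam :: real
  assumes "C > 0" and "lam > 0"
  shows "\<exists>S>0. \<exists>\<delta>>0. \<forall>f :: real \<Rightarrow> real.
           f \<in> borel_measurable borel \<and> (\<forall>t. 0 \<le> f t) \<and> (\<forall>t<0. f t = 0) \<and>
           (\<integral>\<^sup>+ t. ennreal (f t) \<partial>lborel) = 1 \<and>
           (\<forall>t\<ge>0. f t \<le> C * exp (- lam * t))
           \<longrightarrow> (\<forall>s :: complex. cmod s \<le> S \<longrightarrow>
                 cmod ((\<integral>t. exp (- (s * complex_of_real t)) \<partial>(density lborel (\<lambda>t. ennreal (f t)))) - 1)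
                   \<ge> \<delta> * cmod s)"
proof (rule exI[of _ "min (lam / 2) (lam ^ 3 / (128 * C\<^sup>2))"], intro conjI exI[of _ "1 / (8 * C)"] allI impI)
  fix f :: "real \<Rightarrow> real" and s :: complex
  assume "f \<in> borel_measurable borel \<and> (\<forall>t. 0 \<le> f t) \<and> (\<forall>t<0. f t = 0) \<and>
    (\<integral>\<^sup>+ t. ennreal (f t) \<partial>lborel) = 1 \<and> (\<forall>t\<ge>0. f t \<le> C * exp (- lam * t))"
    and "cmod s \<le> min (lam / 2) (lam ^ 3 / (128 * C\<^sup>2))"
  then show "1 / (8 * C) * cmod s
      \<le> cmod ((\<integral>t. exp (- (s * complex_of_real t)) \<partial>density lborel (\<lambda>t. ennreal (f t))) - 1)"
    using norm_laplace_transform_sub_one_ge_of_exp_bounded_density[of C lam f s] assms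
    by auto
qed (use assms in auto)

end
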